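(* Let $m,n\ge 2$ be integers and let $\mathcal{A}\in T_{m,n}$. If $\mathcal{A}$ is a nonzero genuinely positive definite tensor, then $-\mathcal{A}$ is not a genuinely positive definite tensor. If $\mathcal{A}$ is a barren tensor, then $-\mathcal{A}$ is also a barren tensor.
   Context: $T_{m,n}$ denotes the set of real $m$th order $n$-dimensional cubic tensors $\mathcal{A}=(a_{i_1\dots i_m})$, $i_1,\dots,i_m\in\{1,\dots,n\}$. For $\mathcal{A}\in T_{m,n}$, $\mathrm{Sym}(\mathcal{A})$ is the unique symmetric tensor $\mathcal{B}$ (entries invariant under permutation of indices) with $\mathcal{B}\mathbf{x}^m=\mathcal{A}\mathbf{x}^m$ for all $\mathbf{x}\in\mathbb{R}^n$, where $\mathcal{A}\mathbf{x}^m=\sum_{i_1,\dots,i_m}a_{i_1\dots i_m}x_{i_1}\cdots x_{i_m}$. For $\mathbf{x}$, $\mathcal{A}\mathbf{x}^{m-1}$ is the vector with $i$th component $\sum_{i_2,\dots,i_m}a_{ii_2\dots i_m}x_{i_2}\cdots x_{i_m}$, and $\mathbf{x}^{[m-1]}=(x_i^{m-1})_i$. A real number $\lambda$ is an H-eigenvalue of $\mathcal{A}$ if there is a nonzero $\mathbf{x}\in\mathbb{R}^n$ with $\mathcal{A}\mathbf{x}^{m-1}=\lambda\mathbf{x}^{[m-1]}$. $\mathcal{A}$ is genuinely positive definite if $\mathrm{Sym}(\mathcal{A})$ has at least one H-eigenvalue and all its H-eigenvalues are positive. $\mathcal{A}$ is a barren tensor if $\mathrm{Sym}(\mathcal{A})$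 has no H-eigenvalue. *)

theory Defs
  imports Complex_Main "HOL-Combinatorics.Permutations"
begin

text \<open>A real tensor of order m and dimension n is represented as a function on
index lists; only lists of length m with entries in {0..<n} (0-based indices) are relevant.\<close>

type_synonym tensor = "nat list \<Rightarrow> real"

definition idx :: "nat \<Rightarrow> nat \<Rightarrow> nat list set" where
  "idx m n = {is. length is = m \<and> set is \<subseteq> {..<n}}"

definition tensor_neg :: "tensor \<Rightarrow> tensor" where
  "tensor_neg A = (\<lambda>is. - A is)"

definition tensor_nonzero :: "nat \<Rightarrow> nat \<Rightarrow> tensor \<Rightarrow> bool" where
  "tensor_nonzero m n A \<longleftrightarrow> (\<exists>is\<in>idx m n. A is \<noteq> 0)"

definition Sym :: "nat \<Rightarrow> tensor \<Rightarrow> tensor" where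
  "Sym m A = (\<lambda>is. (\<Sum>p\<in>{p. p permutes {..<m}}. A (map (\<lambda>k. is ! p k) [0..<m])) / fact m)"

definition tensor_apply :: "nat \<Rightarrow> nat \<Rightarrow> tensor \<Rightarrow> (nat \<Rightarrow> real) \<Rightarrow> nat \<Rightarrow> real" where
  "tensor_apply m n A x i =
     (\<Sum>js\<in>idx (m - 1) n. A (i # js) * (\<Prod>k<m - 1. x (js ! k)))"

definition H_eigenvalue :: "nat \<Rightarrow> nat \<Rightarrow> tensor \<Rightarrow> real \<Rightarrow> bool" where
  "H_eigenvalue m n A lam \<longleftrightarrow>
     (\<exists>x :: nat \<Rightarrow> real. (\<exists>i<n. x i \<noteq> 0) \<and>
        (\<forall>i<n. tensor_apply m n A x i = lam * x i ^ (m - 1)))"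

definition genuinely_pd :: "nat \<Rightarrow> nat \<Rightarrow> tensor \<Rightarrow> bool" where
  "genuinely_pd m n A \<longleftrightarrow>
     (\<exists>lam. H_eigenvalue m n (Sym m A) lam) \<and>
     (\<forall>lam. H_eigenvalue m n (Sym m A) lam \<longrightarrow> lam > 0)"

definition barren :: "nat \<Rightarrow> nat \<Rightarrow> tensor \<Rightarrow> bool" where
  "barren m n A \<longleftrightarrow> \<not> (\<exists>lam. H_eigenvalue m n (Sym m A) lam)"

end

theory Submission
  imports Defs
begin

text \<open>Symmetrization and the map x \<mapsto> A x^{m-1} are linear in A, so the H-eigenvalues of
Sym(-A) are exactly the negatives of those of Sym(A). A nonempty set of positive reals
negates to a nonempty set of negative reals, and the empty set negates to itself.\<close>

lemma Sym_tensor_neg: "Sym m (tensor_neg A) = tensor_neg (Sym m A)"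
  unfolding Sym_def tensor_neg_def by (simp add: sum_negf)

lemma tensor_apply_tensor_neg:
  "tensor_apply m n (tensor_neg A) x i = - tensor_apply m n A x i"
  unfolding tensor_apply_def tensor_neg_def by (simp add: sum_negf)

lemma H_eigenvalue_tensor_neg:
  "H_eigenvalue m n (tensor_neg A) lam \<longleftrightarrow> H_eigenvalue m n A (- lam)"
proof -
  have neg_eq_iff: "- a = b \<longleftrightarrow> a = - b" for a b :: real
    by auto
  show ?thesis
    unfolding H_eigenvalue_def tensor_apply_tensor_neg neg_eq_iff by simp
qed

lemma H_eigenvalue_Sym_tensor_neg:
  "H_eigenvalue m n (Sym m (tensor_neg A)) lam \<longleftrightarrow> H_eigenvalue m n (Sym m A) (- lam)"
  by (simp add: Sym_tensor_neg H_eigenvalue_tensor_neg)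

lemma genuinely_pd_imp_not_genuinely_pd_neg:
  assumes "genuinely_pd m n A"
  shows "\<not> genuinely_pd m n (tensor_neg A)"
proof
  assume "genuinely_pd m n (tensor_neg A)"
  then obtain lam where "H_eigenvalue m n (Sym m A) (- lam)" and "lam > 0"
    unfolding genuinely_pd_def H_eigenvalue_Sym_tensor_neg by blast
  with assms show False
    unfolding genuinely_pd_def by force
qed

lemma barren_tensor_neg_iff: "barren m n (tensor_neg A) \<longleftrightarrow> barren m n A"
  unfolding barren_def H_eigenvalue_Sym_tensor_neg by (metis minus_minus)

theorem proposition2p1:
  fixes m n :: nat and A :: tensor
  assumes "m \<ge> 2" and "n \<ge> 2"
  shows "(tensor_nonzero m n A \<and> genuinely_pd m n A \<longrightarrow> \<not> genuinely_pd m n (tensor_neg A))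
       \<and> (barren m n A \<longrightarrow> barren m n (tensor_neg A))"
  by (simp add: genuinely_pd_imp_not_genuinely_pd_neg barren_tensor_neg_iff)

end
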